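(* Let $G=(V,E,A)$ be an undirected attributed graph with $A=\{a,b\}$, let $k,\delta$ be integers, and let $R,C\subseteq V$ be disjoint vertex sets. Let $G'$ be the subgraph of $G$ induced by $R\cup C$, properly colored with colors from a totally ordered set (adjacent vertices receive distinct colors), and let every vertex have a distinct integer ID. Define the total order $\prec$ on $R\cup C$ by $u\prec v$ iff $color(u)<color(v)$, or $color(u)=color(v)$ and $ID(u)<ID(v)$, and let $\vec G'$ be the directed acyclic graph obtained from $G'$ by orienting each edge from its $\prec$-smaller endpoint to its $\prec$-larger endpoint. Let $CP(G')$ be a colorful directed path of $\vec G'$ with the maximum number of vertices. Then $ub_{cp}=|CP(G')|$ satisfies $MRFC(R,C)\le ub_{cp}$.
   Context: For $S\subseteq V$, $cnt_S(x)=|\{v\in S:A(v)=x\}|$. A $(k,\delta)$-relative fair clique of $G$ is a clique $K$ of $G$ with $cnt_K(a)\ge k$, $cnt_K(b)\ge k$, $|cnt_K(a)-cnt_K(b)|\le\delta$, such that no clique $K'\supsetneq K$ of $G$ satisfies these three conditions. $MRFC(R,C)$ denotes the maximum number of vertices of a $(k,\delta)$-relative fair clique $K$ of $G$ with $R\subseteq K\subseteq R\cup C$ (the search instance $(R,C)$: $R$ is the current partial clique and $C$ the candidate set). A colorful path is a path $v_1,\dots,v_p$ whose vertices all have pairwise distinct colors; $|CP(G')|$ is its number of vertices. *)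

theory Defs
  imports Main
begin

datatype attr = AttrA | AttrB

definition ugraph :: "'v set \<Rightarrow> ('v \<Rightarrow> 'v \<Rightarrow> bool) \<Rightarrow> bool" where
  "ugraph V E \<longleftrightarrow> finite V \<and> (\<forall>u v. E u v \<longrightarrow> u \<in> V \<and> v \<in> V \<and> u \<noteq> v \<and> E v u)"

definition cnt :: "('v \<Rightarrow> attr) \<Rightarrow> 'v set \<Rightarrow> attr \<Rightarrow> nat" where
  "cnt A S x = card {v \<in> S. A v = x}"

definition is_clique :: "'v set \<Rightarrow> ('v \<Rightarrow> 'v \<Rightarrow> bool) \<Rightarrow> 'v set \<Rightarrow> bool" where
  "is_clique V E K \<longleftrightarrow> K \<subseteq> V \<and> (\<forall>u\<in>K. \<forall>v\<in>K. u \<noteq> v \<longrightarrow> E u v)"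

definition fair_conds :: "('v \<Rightarrow> attr) \<Rightarrow> int \<Rightarrow> int \<Rightarrow> 'v set \<Rightarrow> bool" where
  "fair_conds A k \<delta> K \<longleftrightarrow>
     int (cnt A K AttrA) \<ge> k \<and> int (cnt A K AttrB) \<ge> k \<and>
     \<bar>int (cnt A K AttrA) - int (cnt A K AttrB)\<bar> \<le> \<delta>"

definition rel_fair_clique ::
  "'v set \<Rightarrow> ('v \<Rightarrow> 'v \<Rightarrow> bool) \<Rightarrow> ('v \<Rightarrow> attr) \<Rightarrow> int \<Rightarrow> int \<Rightarrow> 'v set \<Rightarrow> bool" where
  "rel_fair_clique V E A k \<delta> K \<longleftrightarrow>
     is_clique V E K \<and> fair_conds A k \<delta> K \<and>
     \<not> (\<exists>K'. K \<subset> K' \<and> is_clique V E K' \<and> fair_conds A k \<delta> K')"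

text \<open>MRFC(R,C): maximum size of a relative fair clique K with R \<subseteq> K \<subseteq> R \<union> C
  (Sup over nat; 0 if there is none).\<close>
definition MRFC ::
  "'v set \<Rightarrow> ('v \<Rightarrow> 'v \<Rightarrow> bool) \<Rightarrow> ('v \<Rightarrow> attr) \<Rightarrow> int \<Rightarrow> int \<Rightarrow> 'v set \<Rightarrow> 'v set \<Rightarrow> nat" where
  "MRFC V E A k \<delta> R C =
     Sup (card ` {K. rel_fair_clique V E A k \<delta> K \<and> R \<subseteq> K \<and> K \<subseteq> R \<union> C})"

definition prec :: "('v \<Rightarrow> 'c::linorder) \<Rightarrow> ('v \<Rightarrow> int) \<Rightarrow> 'v \<Rightarrow> 'v \<Rightarrow> bool" where
  "prec col ID u v \<longleftrightarrow> col u < col v \<or> (col u = col v \<and> ID u < ID v)"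

definition oarc ::
  "('v \<Rightarrow> 'v \<Rightarrow> bool) \<Rightarrow> 'v set \<Rightarrow> ('v \<Rightarrow> 'c::linorder) \<Rightarrow> ('v \<Rightarrow> int) \<Rightarrow> 'v \<Rightarrow> 'v \<Rightarrow> bool" where
  "oarc E W col ID u v \<longleftrightarrow> u \<in> W \<and> v \<in> W \<and> E u v \<and> prec col ID u v"

definition colorful_dpath ::
  "('v \<Rightarrow> 'v \<Rightarrow> bool) \<Rightarrow> 'v set \<Rightarrow> ('v \<Rightarrow> 'c::linorder) \<Rightarrow> ('v \<Rightarrow> int) \<Rightarrow> 'v list \<Rightarrow> bool" where
  "colorful_dpath E W col ID p \<longleftrightarrow>
     p \<noteq> [] \<and> set p \<subseteq> W \<and> distinct p \<and>
     (\<forall>i. Suc i < length p \<longrightarrow> oarc E W col ID (p ! i) (p ! Suc i)) \<and>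
     distinct (map col p)"

end

theory Submission
  imports Defs
begin

(* Every clique K inside R \<union> C is properly coloured, so its vertices have pairwise distinct
   colours. Listing K by increasing colour therefore gives a path of the oriented graph (consecutive
   vertices are adjacent and increase in colour, hence in the order \<prec>) that is colourful and
   has |K| vertices, so |K| \<le> |CP(G')|. *)

lemma exists_list_strictly_sorted_by_injective_key:
  fixes f :: "'a \<Rightarrow> 'b::linorder"
  assumes "finite K" and "inj_on f K"
  shows "\<exists>p. set p = K \<and> sorted_wrt (\<lambda>u v. f u < f v) p"
proof -
  define p where "p = map (the_inv_into K f) (sorted_list_of_set (f ` K))"
  have "map f p = sorted_list_of_set (f ` K)"
    unfolding p_def map_map
    by (rule map_idI) (simp add: assms f_the_inv_into_f)
  then have "sorted_wrt (\<lambda>u v. f u < f v) p"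
    by (metis sorted_wrt_map strict_sorted_list_of_set)
  moreover have "set p = K"
    unfolding p_def using assms by (simp add: image_image the_inv_into_f_f)
  ultimately show ?thesis by blast
qed

lemma colorful_dpath_if_sorted_by_color:
  fixes col :: "'v \<Rightarrow> 'c::linorder"
  assumes "p \<noteq> []" and "set p \<subseteq> W"
    and adjacent: "\<forall>u\<in>set p. \<forall>v\<in>set p. u \<noteq> v \<longrightarrow> E u v"
    and sorted: "sorted_wrt (\<lambda>u v. col u < col v) p"
  shows "colorful_dpath E W col ID p"
proof -
  have strict: "sorted_wrt (<) (map col p)"
    using sorted by (simp add: sorted_wrt_map)
  then have distinct_colors: "distinct (map col p)"
    by (simp add: strict_sorted_iff)
  have "oarc E W col ID (p ! i) (p ! Suc i)" if "Suc i < length p" for i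
  proof -
    have "col (p ! i) < col (p ! Suc i)"
      using sorted_wrt_nth_less[OF sorted, of i "Suc i"] that by simp
    moreover have "p ! i \<in> set p" "p ! Suc i \<in> set p"
      using that by simp_all
    moreover have "p ! i \<noteq> p ! Suc i"
      using calculation(1) by auto
    ultimately show ?thesis
      unfolding oarc_def prec_def using adjacent assms(2) by auto
  qed
  then show ?thesis
    unfolding colorful_dpath_def
    using assms(1,2) distinct_colors distinct_map by blast
qed

lemma properly_colored_clique_gives_colorful_dpath:
  fixes col :: "'v \<Rightarrow> 'c::linorder"
  assumes "finite K" and "K \<noteq> {}" and "K \<subseteq> W"
    and adjacent: "\<forall>u\<in>K. \<forall>v\<in>K. u \<noteq> v \<longrightarrow> E u v"
    and proper: "\<forall>u\<in>W. \<forall>v\<in>W. E u v \<longrightarrow> col u \<noteq> col v"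
  shows "\<exists>p. colorful_dpath E W col ID p \<and> length p = card K"
proof -
  have "inj_on col K"
    unfolding inj_on_def using adjacent proper \<open>K \<subseteq> W\<close> by blast
  then obtain p where p: "set p = K" "sorted_wrt (\<lambda>u v. col u < col v) p"
    using exists_list_strictly_sorted_by_injective_key[OF \<open>finite K\<close>] by blast
  then have "colorful_dpath E W col ID p"
    using assms by (intro colorful_dpath_if_sorted_by_color) auto
  moreover from this have "length p = card K"
    using p(1) by (metis colorful_dpath_def distinct_card)
  ultimately show ?thesis by blast
qed

theorem lemma14:
  fixes V :: "'v set" and E :: "'v \<Rightarrow> 'v \<Rightarrow> bool" and A :: "'v \<Rightarrow> attr"
    and k \<delta> :: int and R C :: "'v set"
    and col :: "'v \<Rightarrow> 'c::linorder" and ID :: "'v \<Rightarrow> int" and P :: "'v list"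
  assumes "ugraph V E"
    and "R \<subseteq> V" and "C \<subseteq> V" and "R \<inter> C = {}"
    and "\<forall>u\<in>R \<union> C. \<forall>v\<in>R \<union> C. E u v \<longrightarrow> col u \<noteq> col v"
    and "inj_on ID V"
    and "colorful_dpath E (R \<union> C) col ID P"
    and "\<forall>Q. colorful_dpath E (R \<union> C) col ID Q \<longrightarrow> length Q \<le> length P"
  shows "MRFC V E A k \<delta> R C \<le> length P"
proof -
  let ?sizes = "card ` {K. rel_fair_clique V E A k \<delta> K \<and> R \<subseteq> K \<and> K \<subseteq> R \<union> C}"
  have "card K \<le> length P"
    if "rel_fair_clique V E A k \<delta> K" and "K \<subseteq> R \<union> C" and "K \<noteq> {}" for K
  proof -
    have "K \<subseteq> V" and "\<forall>u\<in>K. \<forall>v\<in>K. u \<noteq> v \<longrightarrow> E u v"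
      using that(1) unfolding rel_fair_clique_def is_clique_def by auto
    moreover have "finite K"
      using \<open>K \<subseteq> V\<close> \<open>ugraph V E\<close> unfolding ugraph_def by (auto intro: finite_subset)
    ultimately show ?thesis
      using properly_colored_clique_gives_colorful_dpath[of K "R \<union> C" E col ID] that assms(5,8)
      by fastforce
  qed
  then have "\<forall>n\<in>?sizes. n \<le> length P"
    by fastforce
  then show ?thesis
    unfolding MRFC_def
    by (cases "?sizes = {}") (simp only: Sup_nat_empty le0, meson cSup_least)
qed

end
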